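(* If $G$ is a connected, claw-free, cubic graph, then \[ \sigma_{(2,3)}(G) \le \sigma_{(2,2)}(G) \le \sigma_{(2,3)}(G)+1. \] In addition, if $G\neq K_4$, then $u(G) \le \sigma_{(2,2)}(G) \le u(G)+1$, where $u(G)$ is the number of units of $G$.
   Context: A graph is claw-free if it has no induced subgraph isomorphic to $K_{1,3}$; it is cubic if every vertex has degree $3$. A diamond is an induced subgraph isomorphic to $K_4$ minus one edge. For a connected, claw-free, cubic graph $G\neq K_4$, the vertex set $V(G)$ can be uniquely partitioned into sets each of which induces a triangle or a diamond in $G$; the parts of this partition are called units, and $u(G)$ is the number of units. $(p,q)$-spreading: let $p\in\mathbb{N}$ and $q\in\mathbb{N}\cup\{\infty\}$. Start with a set $S\subseteq V(G)$ of blue vertices, all other vertices white. The color change rule: if a white vertex $w$ has at least $p$ blue neighbors, and at least one of the blue neighbors of $w$ has at most $q$ white neighbors, then $w$ is recolored blue. $S$ is a $(p,q)$-spreading set if repeatedly applying this rule eventually colors all vertices blue. $\sigma_{(p,q)}(G)$ is the minimum cardinality of a $(p,q)$-spreading set of $G$. *)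

theory Defs
  imports Main "HOL-Library.Extended_Nat"
begin

definition simple_graph :: "'a set \<Rightarrow> ('a \<Rightarrow> 'a \<Rightarrow> bool) \<Rightarrow> bool" where
  "simple_graph V E \<longleftrightarrow> finite V \<and> (\<forall>u v. E u v \<longrightarrow> u \<in> V \<and> v \<in> V)
     \<and> (\<forall>u v. E u v \<longrightarrow> E v u) \<and> (\<forall>v. \<not> E v v)"

definition nbrs :: "'a set \<Rightarrow> ('a \<Rightarrow> 'a \<Rightarrow> bool) \<Rightarrow> 'a \<Rightarrow> 'a set" where
  "nbrs V E v = {u \<in> V. E v u}"

definition connected_graph :: "'a set \<Rightarrow> ('a \<Rightarrow> 'a \<Rightarrow> bool) \<Rightarrow> bool" where
  "connected_graph V E \<longleftrightarrow> V \<noteq> {} \<and>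
     (\<forall>u\<in>V. \<forall>v\<in>V. (\<lambda>x y. x \<in> V \<and> y \<in> V \<and> E x y)\<^sup>*\<^sup>* u v)"

definition cubic :: "'a set \<Rightarrow> ('a \<Rightarrow> 'a \<Rightarrow> bool) \<Rightarrow> bool" where
  "cubic V E \<longleftrightarrow> (\<forall>v\<in>V. card (nbrs V E v) = 3)"

definition claw_free :: "'a set \<Rightarrow> ('a \<Rightarrow> 'a \<Rightarrow> bool) \<Rightarrow> bool" where
  "claw_free V E \<longleftrightarrow> \<not> (\<exists>v a b c. v \<in> V \<and> a \<in> V \<and> b \<in> V \<and> c \<in> V \<and>
      a \<noteq> b \<and> a \<noteq> c \<and> b \<noteq> c \<and> E v a \<and> E v b \<and> E v c \<and>
      \<not> E a b \<and> \<not> E a c \<and> \<not> E b c)"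

definition is_K4 :: "'a set \<Rightarrow> ('a \<Rightarrow> 'a \<Rightarrow> bool) \<Rightarrow> bool" where
  "is_K4 V E \<longleftrightarrow> card V = 4 \<and> (\<forall>u\<in>V. \<forall>v\<in>V. u \<noteq> v \<longrightarrow> E u v)"

definition induces_triangle :: "('a \<Rightarrow> 'a \<Rightarrow> bool) \<Rightarrow> 'a set \<Rightarrow> bool" where
  "induces_triangle E X \<longleftrightarrow> card X = 3 \<and> (\<forall>u\<in>X. \<forall>v\<in>X. u \<noteq> v \<longrightarrow> E u v)"

definition induces_diamond :: "('a \<Rightarrow> 'a \<Rightarrow> bool) \<Rightarrow> 'a set \<Rightarrow> bool" where
  "induces_diamond E X \<longleftrightarrow> card X = 4 \<and>
     (\<exists>a\<in>X. \<exists>b\<in>X. a \<noteq> b \<and> \<not> E a b \<and>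
        (\<forall>u\<in>X. \<forall>v\<in>X. u \<noteq> v \<and> {u, v} \<noteq> {a, b} \<longrightarrow> E u v))"

definition unit_partition :: "'a set \<Rightarrow> ('a \<Rightarrow> 'a \<Rightarrow> bool) \<Rightarrow> 'a set set \<Rightarrow> bool" where
  "unit_partition V E P \<longleftrightarrow> \<Union>P = V \<and> (\<forall>X\<in>P. \<forall>Y\<in>P. X \<noteq> Y \<longrightarrow> X \<inter> Y = {}) \<and>
     (\<forall>X\<in>P. induces_triangle E X \<or> induces_diamond E X)"

(* u(G): number of units of the (unique) unit partition *)
definition num_units :: "'a set \<Rightarrow> ('a \<Rightarrow> 'a \<Rightarrow> bool) \<Rightarrow> nat" where
  "num_units V E = card (THE P. unit_partition V E P)"

(* one application of the (p,q) colour change rule: blue set B becomes insert w B *)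
definition spread_step :: "'a set \<Rightarrow> ('a \<Rightarrow> 'a \<Rightarrow> bool) \<Rightarrow> nat \<Rightarrow> enat \<Rightarrow> 'a set \<Rightarrow> 'a set \<Rightarrow> bool" where
  "spread_step V E p q B B' \<longleftrightarrow> (\<exists>w. w \<in> V \<and> w \<notin> B \<and> B' = insert w B \<and>
     card (nbrs V E w \<inter> B) \<ge> p \<and>
     (\<exists>v \<in> nbrs V E w \<inter> B. enat (card (nbrs V E v - B)) \<le> q))"

definition spreading_set :: "'a set \<Rightarrow> ('a \<Rightarrow> 'a \<Rightarrow> bool) \<Rightarrow> nat \<Rightarrow> enat \<Rightarrow> 'a set \<Rightarrow> bool" where
  "spreading_set V E p q S \<longleftrightarrow> S \<subseteq> V \<and> (spread_step V E p q)\<^sup>*\<^sup>* S V"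

definition sigma :: "'a set \<Rightarrow> ('a \<Rightarrow> 'a \<Rightarrow> bool) \<Rightarrow> nat \<Rightarrow> enat \<Rightarrow> nat" where
  "sigma V E p q = (LEAST k. \<exists>S. spreading_set V E p q S \<and> card S = k)"

end

theory Submission
  imports Defs
begin

(* Every vertex has at least two neighbours in its own unit, hence, G being cubic, at most one
   outside it. A white vertex needs two blue neighbours to turn blue, so the first vertex of a unit
   to turn blue already has a blue neighbour in that unit: every (2,q)-spreading set meets every
   unit, and u(G) <= sigma_(2,q)(G).
   Conversely, two blue vertices of a unit colour the whole unit. If a blue unit has an edge xw into
   a white unit C, then x has a blue neighbour in its own unit and hence at most two white ones, so
   one extra seed in C next to w makes w, and then all of C, blue. By connectivity the units can be
   absorbed one at a time, giving sigma_(2,2)(G) <= u(G) + 1. Enlarging q only helps, so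
   u(G) <= sigma_(2,3)(G) <= sigma_(2,2)(G) <= u(G) + 1; K4 is coloured from two seeds. *)

lemma rtranclp_leaves_set:
  assumes "R\<^sup>*\<^sup>* u v" "u \<in> A" "v \<notin> A"
  shows "\<exists>x y. x \<in> A \<and> y \<notin> A \<and> R x y"
  using assms by (induction rule: rtranclp_induct) blast+

lemma spreading_set_refl: "spreading_set V E p q V"
  unfolding spreading_set_def by blast

lemma sigma_attained: "\<exists>S. spreading_set V E p q S \<and> card S = sigma V E p q"
  unfolding sigma_def by (rule LeastI_ex) (use spreading_set_refl in blast)

lemma sigma_le_card: "spreading_set V E p q S \<Longrightarrow> sigma V E p q \<le> card S"
  unfolding sigma_def by (rule Least_le) blast

lemma le_sigma: "(\<And>S. spreading_set V E p q S \<Longrightarrow> k \<le> card S) \<Longrightarrow> k \<le> sigma V E p q"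
  using sigma_attained by metis

lemma spreading_set_mono_q:
  assumes "spreading_set V E p q S" "q \<le> q'"
  shows "spreading_set V E p q' S"
proof -
  have "spread_step V E p q \<le> spread_step V E p q'"
    using \<open>q \<le> q'\<close> unfolding spread_step_def by (fastforce intro: order_trans)
  with assms(1) show ?thesis
    unfolding spreading_set_def by (meson predicate2D rtranclp_mono)
qed

lemma sigma_antimono_q: "q \<le> q' \<Longrightarrow> sigma V E p q' \<le> sigma V E p q"
  by (metis sigma_attained sigma_le_card spreading_set_mono_q)

lemma spread_from_empty:
  assumes "(spread_step V E p q)\<^sup>*\<^sup>* {} B" "0 < p"
  shows "B = {}"
  using assms by (induction rule: rtranclp_induct) (auto simp: spread_step_def)

lemma sigma_pos:
  assumes "finite V" "V \<noteq> {}" "0 < p"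
  shows "0 < sigma V E p q"
proof -
  have "1 \<le> card S" if S: "spreading_set V E p q S" for S
  proof -
    have "S \<noteq> {}"
      using S spread_from_empty[of V E p q V] assms(2,3) unfolding spreading_set_def by blast
    moreover have "finite S"
      using S assms(1) finite_subset unfolding spreading_set_def by blast
    ultimately show ?thesis by (simp add: Suc_leI card_gt_0_iff)
  qed
  then show ?thesis using le_sigma[of V E p q 1] by simp
qed

locale finite_simple_graph =
  fixes V :: "'a set" and E :: "'a \<Rightarrow> 'a \<Rightarrow> bool"
  assumes simple: "simple_graph V E"
begin

lemma finite_V: "finite V"
  using simple unfolding simple_graph_def by blast

lemma edge_in_V: "E u v \<Longrightarrow> u \<in> V \<and> v \<in> V"
  using simple unfolding simple_graph_def by blast

lemma edge_sym: "E u v \<Longrightarrow> E v u"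
  using simple unfolding simple_graph_def by blast

lemma no_loop [simp]: "\<not> E v v"
  using simple unfolding simple_graph_def by blast

lemma edge_neq: "E u v \<Longrightarrow> u \<noteq> v"
  by auto

lemma in_nbrs_iff [simp]: "u \<in> nbrs V E v \<longleftrightarrow> E v u"
  using edge_in_V unfolding nbrs_def by blast

lemma finite_nbrs [simp]: "finite (nbrs V E v)"
  using finite_V unfolding nbrs_def by simp

abbreviation spreads :: "nat \<Rightarrow> enat \<Rightarrow> 'a set \<Rightarrow> 'a set \<Rightarrow> bool" where
  "spreads p q \<equiv> (spread_step V E p q)\<^sup>*\<^sup>*"

lemma spreads_increasing: "spreads p q S B \<Longrightarrow> S \<subseteq> B"
  by (induction rule: rtranclp_induct) (auto simp: spread_step_def)

lemma spreads_subset_V: "spreads p q S B \<Longrightarrow> S \<subseteq> V \<Longrightarrow> B \<subseteq> V"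
  by (induction rule: rtranclp_induct) (auto simp: spread_step_def)

lemma spread_step_superset:
  assumes "spread_step V E p q C D" "C \<subseteq> C'"
  shows "D \<subseteq> C' \<or> spread_step V E p q C' (D \<union> C')"
proof -
  from assms(1) obtain w v where D: "D = insert w C" and w: "w \<in> V" "p \<le> card (nbrs V E w \<inter> C)"
    and v: "v \<in> nbrs V E w \<inter> C" "enat (card (nbrs V E v - C)) \<le> q"
    unfolding spread_step_def by blast
  have "card (nbrs V E w \<inter> C) \<le> card (nbrs V E w \<inter> C')"
    using assms(2) by (intro card_mono) auto
  moreover have "card (nbrs V E v - C') \<le> card (nbrs V E v - C)"
    using assms(2) by (intro card_mono) auto
  then have "enat (card (nbrs V E v - C')) \<le> q"
    using v(2) by (meson enat_ord_simps(1) order_trans)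
  ultimately have "w \<notin> C' \<Longrightarrow> spread_step V E p q C' (insert w C')"
    unfolding spread_step_def using w v assms(2) by (intro exI[of _ w]) (auto intro: order_trans)
  moreover have "D \<union> C' = insert w C'" using D assms(2) by blast
  ultimately show ?thesis using D assms(2) by auto
qed

lemma spreads_mono_seed:
  assumes "spreads p q B C" "B \<subseteq> B'"
  shows "\<exists>C'. spreads p q B' C' \<and> C \<subseteq> C'"
  using assms
proof (induction rule: rtranclp_induct)
  case base
  then show ?case by blast
next
  case (step C D)
  then obtain C' where C': "spreads p q B' C'" "C \<subseteq> C'" by blast
  from spread_step_superset[OF step.hyps(2) C'(2)]
  consider "D \<subseteq> C'" | "spread_step V E p q C' (D \<union> C')" by blast
  then show ?case
  proof cases
    case 1
    then show ?thesis using C'(1) by blast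
  next
    case 2
    with C'(1) have "spreads p q B' (D \<union> C')" by (rule rtranclp.rtrancl_into_rtrancl)
    then show ?thesis by blast
  qed
qed

lemma spreading_set_meets:
  assumes S: "spreading_set V E p q S" and X: "X \<subseteq> V" "X \<noteq> {}"
    and few_outside: "\<And>w. w \<in> X \<Longrightarrow> card (nbrs V E w - X) < p"
  shows "X \<inter> S \<noteq> {}"
proof
  assume XS: "X \<inter> S = {}"
  have "spreads p q S B \<Longrightarrow> X \<inter> B = {}" for B
  proof (induction rule: rtranclp_induct)
    case base
    show ?case using XS .
  next
    case (step B C)
    then obtain w where C: "C = insert w B" and w: "p \<le> card (nbrs V E w \<inter> B)"
      unfolding spread_step_def by blast
    have "w \<notin> X"
    proof
      assume "w \<in> X"
      have "card (nbrs V E w \<inter> B) \<le> card (nbrs V E w - X)"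
        using step.IH by (intro card_mono) auto
      with few_outside[OF \<open>w \<in> X\<close>] w show False by linarith
    qed
    then show ?case using step.IH C by blast
  qed
  with S X show False unfolding spreading_set_def by blast
qed

lemma card_le_spreading_set:
  assumes S: "spreading_set V E p q S" and disj: "pairwise disjnt P"
    and parts: "\<And>X. X \<in> P \<Longrightarrow> X \<subseteq> V \<and> X \<noteq> {} \<and> (\<forall>w\<in>X. card (nbrs V E w - X) < p)"
  shows "card P \<le> card S"
proof -
  have "\<forall>X\<in>P. \<exists>s. s \<in> X \<inter> S"
    using spreading_set_meets[OF S] parts by blast
  then obtain f where f: "\<forall>X\<in>P. f X \<in> X \<inter> S" by (auto dest: bchoice)
  have "inj_on f P"
  proof (rule inj_onI)
    fix X Y assume "X \<in> P" "Y \<in> P" "f X = f Y"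
    then have "\<not> disjnt X Y" using f unfolding disjnt_def by (metis IntD1 disjoint_iff)
    then show "X = Y" using disj \<open>X \<in> P\<close> \<open>Y \<in> P\<close> unfolding pairwise_def by blast
  qed
  moreover have "f ` P \<subseteq> S" using f by blast
  moreover have "finite S"
    using S finite_V finite_subset unfolding spreading_set_def by blast
  ultimately show ?thesis by (rule card_inj_on_le)
qed

definition triangle :: "'a \<Rightarrow> 'a \<Rightarrow> 'a \<Rightarrow> bool" where
  "triangle a b c \<longleftrightarrow> a \<noteq> b \<and> a \<noteq> c \<and> b \<noteq> c \<and> E a b \<and> E a c \<and> E b c"

definition diamond :: "'a \<Rightarrow> 'a \<Rightarrow> 'a \<Rightarrow> 'a \<Rightarrow> bool" where
  "diamond a b m1 m2 \<longleftrightarrow> a \<noteq> b \<and> a \<noteq> m1 \<and> a \<noteq> m2 \<and> b \<noteq> m1 \<and> b \<noteq> m2 \<and> m1 \<noteq> m2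
     \<and> \<not> E a b \<and> E a m1 \<and> E a m2 \<and> E b m1 \<and> E b m2 \<and> E m1 m2"

lemma triangle_swap:
  "triangle a b c \<Longrightarrow> triangle b a c" "triangle a b c \<Longrightarrow> triangle a c b"
  unfolding triangle_def using edge_sym by blast+

lemma diamond_swap:
  "diamond a b m1 m2 \<Longrightarrow> diamond b a m1 m2" "diamond a b m1 m2 \<Longrightarrow> diamond a b m2 m1"
  unfolding diamond_def using edge_sym by blast+

lemma induces_triangle_iff: "induces_triangle E X \<longleftrightarrow> (\<exists>a b c. X = {a, b, c} \<and> triangle a b c)"
proof
  assume "induces_triangle E X"
  then obtain a b c where "X = {a, b, c}" "a \<noteq> b" "b \<noteq> c" "a \<noteq> c"
    "\<forall>u\<in>X. \<forall>v\<in>X. u \<noteq> v \<longrightarrow> E u v"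
    unfolding induces_triangle_def card_3_iff by blast
  then show "\<exists>a b c. X = {a, b, c} \<and> triangle a b c" unfolding triangle_def by blast
next
  assume "\<exists>a b c. X = {a, b, c} \<and> triangle a b c"
  then show "induces_triangle E X"
    unfolding induces_triangle_def triangle_def using edge_sym by auto
qed

lemma induces_diamond_iff:
  "induces_diamond E X \<longleftrightarrow> (\<exists>a b m1 m2. X = {a, b, m1, m2} \<and> diamond a b m1 m2)"
proof
  assume "induces_diamond E X"
  then obtain a b where ab: "card X = 4" "a \<in> X" "b \<in> X" "a \<noteq> b" "\<not> E a b"
    "\<forall>u\<in>X. \<forall>v\<in>X. u \<noteq> v \<and> {u, v} \<noteq> {a, b} \<longrightarrow> E u v"
    unfolding induces_diamond_def by blast
  then have "finite X" by (metis card.infinite zero_neq_numeral)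
  with ab have "card (X - {a, b}) = 2" by (simp add: card_Diff_subset)
  then obtain m1 m2 where m: "X - {a, b} = {m1, m2}" "m1 \<noteq> m2" unfolding card_2_iff by blast
  then have X: "X = {a, b, m1, m2}" using ab by blast
  have "diamond a b m1 m2"
    unfolding diamond_def using ab m X
    by (smt (verit, ccfv_threshold) Diff_iff doubleton_eq_iff insertCI)
  with X show "\<exists>a b m1 m2. X = {a, b, m1, m2} \<and> diamond a b m1 m2" by blast
next
  assume "\<exists>a b m1 m2. X = {a, b, m1, m2} \<and> diamond a b m1 m2"
  then obtain a b m1 m2 where X: "X = {a, b, m1, m2}" and d: "diamond a b m1 m2" by blast
  have "card X = 4" using X d unfolding diamond_def by auto
  moreover have "\<forall>u\<in>X. \<forall>v\<in>X. u \<noteq> v \<and> {u, v} \<noteq> {a, b} \<longrightarrow> E u v"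
    using X d edge_sym unfolding diamond_def by auto
  ultimately show "induces_diamond E X"
    unfolding induces_diamond_def using X d unfolding diamond_def by blast
qed

lemma triangle_induces: "triangle a b c \<Longrightarrow> induces_triangle E {a, b, c}"
  unfolding induces_triangle_def triangle_def using edge_sym by auto

lemma induces_triangle_at:
  assumes "induces_triangle E X" "v \<in> X"
  obtains y z where "X = {v, y, z}" "triangle v y z"
proof -
  obtain a b c where X: "X = {a, b, c}" "triangle a b c"
    using assms(1) unfolding induces_triangle_iff by blast
  consider "v = a" | "v = b" | "v = c" using X assms(2) by blast
  then show thesis
  proof cases
    case 1
    then show thesis using that X by blast
  next
    case 2
    then show thesis using that[of a c] X triangle_swap(1)[OF X(2)] by (simp add: insert_commute)
  next
    case 3
    then show thesis using that[of a b] X triangle_swap(1)[OF triangle_swap(2)[OF X(2)]]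
      by (simp add: insert_commute)
  qed
qed

lemma unit_partition_subset_V: "unit_partition V E P \<Longrightarrow> X \<in> P \<Longrightarrow> X \<subseteq> V"
  unfolding unit_partition_def by blast

lemma unit_partition_disjoint: "unit_partition V E P \<Longrightarrow> pairwise disjnt P"
  unfolding unit_partition_def pairwise_def disjnt_def by blast

lemma induced_triangle_subset_V: "induces_triangle E X \<Longrightarrow> X \<subseteq> V"
  unfolding induces_triangle_iff triangle_def using edge_in_V by blast

lemma induced_diamond_subset_V: "induces_diamond E X \<Longrightarrow> X \<subseteq> V"
  unfolding induces_diamond_iff diamond_def using edge_in_V by blast

lemma unit_partition_Union: "unit_partition V E P \<Longrightarrow> \<Union>P = V"
  unfolding unit_partition_def by blast

lemma unit_partition_cover:
  assumes "unit_partition V E P" "v \<in> V"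
  obtains X where "X \<in> P" "v \<in> X"
  using assms unit_partition_Union by blast

lemma unit_eq_if_meet:
  assumes "unit_partition V E P" "X \<in> P" "Y \<in> P" "v \<in> X" "v \<in> Y"
  shows "X = Y"
  using assms unfolding unit_partition_def by blast

lemma unit_partition_finite: "unit_partition V E P \<Longrightarrow> finite P"
proof -
  assume "unit_partition V E P"
  then have "P \<subseteq> Pow V" using unit_partition_Union by blast
  then show "finite P" using finite_V by (meson finite_Pow_iff finite_subset)
qed

lemma unit_partition_cases:
  assumes "unit_partition V E P" "X \<in> P"
  obtains "induces_triangle E X" | "induces_diamond E X"
  using assms unfolding unit_partition_def by blast

lemma unit_nonempty: "unit_partition V E P \<Longrightarrow> X \<in> P \<Longrightarrow> X \<noteq> {}"
  by (erule unit_partition_cases) (auto simp: induces_triangle_iff induces_diamond_iff)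

lemma unit_has_two_nbrs:
  assumes "unit_partition V E P" "X \<in> P" "w \<in> X"
  obtains y z where "y \<noteq> z" "y \<in> X" "z \<in> X" "E w y" "E w z"
  using assms(1,2)
proof (cases rule: unit_partition_cases)
  case 1
  then obtain y z where "X = {w, y, z}" "triangle w y z"
    using assms(3) by (rule induces_triangle_at)
  then show thesis using that unfolding triangle_def by blast
next
  case 2
  then obtain a b m1 m2 where "X = {a, b, m1, m2}" "diamond a b m1 m2"
    unfolding induces_diamond_iff by blast
  then show thesis using that assms(3) edge_sym unfolding diamond_def by blast
qed

end

locale cubic_graph = finite_simple_graph +
  assumes cubic: "cubic V E"
begin

lemma card_nbrs: "v \<in> V \<Longrightarrow> card (nbrs V E v) = 3"
  using cubic unfolding cubic_def by blast

lemma no_four_nbrs: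
  assumes "E v a" "E v b" "E v c" "E v d"
    and "a \<noteq> b" "a \<noteq> c" "a \<noteq> d" "b \<noteq> c" "b \<noteq> d" "c \<noteq> d"
  shows False
proof -
  have "card {a, b, c, d} \<le> card (nbrs V E v)"
    using assms by (intro card_mono) auto
  moreover have "card (nbrs V E v) = 3" using card_nbrs edge_in_V assms by blast
  ultimately show False using assms by simp
qed

lemma nbr_cases:
  assumes "E v a" "E v b" "E v c" "a \<noteq> b" "a \<noteq> c" "b \<noteq> c" "E v y"
  shows "y = a \<or> y = b \<or> y = c"
  using no_four_nbrs[of v a b c y] assms by blast

lemma diamond_middle_nbr:
  assumes "diamond a b m1 m2" "E m1 y"
  shows "y = a \<or> y = b \<or> y = m2"
  using assms nbr_cases[of m1 a b m2 y] edge_sym unfolding diamond_def by blast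

lemma diamond_tip_nbrs:
  assumes "diamond a b m1 m2" "E a y" "E a z" "y \<noteq> z"
  shows "y \<in> {m1, m2} \<or> z \<in> {m1, m2}"
  using assms no_four_nbrs[of a m1 m2 y z] unfolding diamond_def by blast

lemma triangle_at_diamond_nbr:
  assumes d: "diamond a b m1 m2" and t: "triangle v y z" and v: "v \<in> {a, b, m1, m2}"
  shows "y \<in> {a, b, m1, m2}"
proof -
  have middle: "y \<in> {a, b, m1, m2}" if "m \<in> {m1, m2}" "E m y" for m y
    using that diamond_middle_nbr[OF d] diamond_middle_nbr[OF diamond_swap(2)[OF d]] by blast
  have t': "E v y" "E v z" "E y z" "y \<noteq> z" using t unfolding triangle_def by auto
  show ?thesis
  proof (cases "v \<in> {m1, m2}")
    case True
    then show ?thesis using middle t' by blast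
  next
    case False
    then have "v = a \<or> v = b" using v by blast
    then have "y \<in> {m1, m2} \<or> z \<in> {m1, m2}"
      using diamond_tip_nbrs[OF d] diamond_tip_nbrs[OF diamond_swap(1)[OF d]] t' by blast
    then show ?thesis using middle t' edge_sym by blast
  qed
qed

lemma induced_triangle_subset_diamond:
  assumes "induces_diamond E D" "induces_triangle E X" "v \<in> X" "v \<in> D"
  shows "X \<subseteq> D"
proof -
  obtain y z where X: "X = {v, y, z}" "triangle v y z"
    using assms(2,3) by (rule induces_triangle_at)
  obtain a b m1 m2 where D: "D = {a, b, m1, m2}" "diamond a b m1 m2"
    using assms(1) unfolding induces_diamond_iff by blast
  have "v \<in> {a, b, m1, m2}" using D(1) assms(4) by simp
  then have "y \<in> {a, b, m1, m2}" "z \<in> {a, b, m1, m2}"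
    using triangle_at_diamond_nbr[OF D(2) X(2)]
      triangle_at_diamond_nbr[OF D(2) triangle_swap(2)[OF X(2)]]
    by auto
  then show ?thesis using X(1) D(1) assms(4) by auto
qed

lemma induced_diamonds_meeting_eq:
  assumes "induces_diamond E D" "induces_diamond E D'" "v \<in> D" "v \<in> D'"
  shows "D = D'"
proof -
  have "D \<subseteq> D'" if h: "induces_diamond E D" "induces_diamond E D'" "v \<in> D" "v \<in> D'" for D D'
  proof -
    obtain a b m1 m2 where D: "D = {a, b, m1, m2}" "diamond a b m1 m2"
      using h(1) unfolding induces_diamond_iff by blast
    have "triangle a m1 m2" "triangle b m1 m2"
      using D(2) unfolding triangle_def diamond_def by auto
    then have "induces_triangle E {a, m1, m2}" "induces_triangle E {b, m1, m2}"
      by (simp_all add: triangle_induces)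
    note halves = this[THEN induced_triangle_subset_diamond[OF h(2)]]
    have "v \<in> {a, m1, m2} \<or> v \<in> {b, m1, m2}" using D h(3) by blast
    then have "m1 \<in> D'" using halves(1)[OF _ h(4)] halves(2)[OF _ h(4)] by (meson insert_subset)
    then have "{a, m1, m2} \<subseteq> D'" "{b, m1, m2} \<subseteq> D'"
      using halves(1)[of m1] halves(2)[of m1] by (meson insertCI)+
    then show ?thesis using D(1) by blast
  qed
  from this[OF assms] have "D \<subseteq> D'" .
  moreover have "card D = card D'" "card D' = 4"
    using assms(1,2) unfolding induces_diamond_def by simp_all
  moreover have "finite D'"
    using \<open>card D' = 4\<close> by (intro card_ge_0_finite) simp
  ultimately show ?thesis by (simp add: card_subset_eq)
qed

lemma card_nbrs_outside_unit:
  assumes P: "unit_partition V E P" and X: "X \<in> P" "w \<in> X"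
  shows "card (nbrs V E w - X) < 2"
proof -
  obtain y z where yz: "y \<noteq> z" "y \<in> X" "z \<in> X" "E w y" "E w z"
    using unit_has_two_nbrs[OF P X] .
  have "card (nbrs V E w - X) \<le> card (nbrs V E w - {y, z})"
    using yz by (intro card_mono) auto
  also have "\<dots> = card (nbrs V E w) - card {y, z}"
    using yz by (intro card_Diff_subset) auto
  also have "\<dots> = 1"
    using yz(1) card_nbrs[of w] unit_partition_subset_V[OF P X(1)] X(2) by auto
  finally show ?thesis by simp
qed

lemma nbr_in_unit:
  assumes "unit_partition V E P" "X \<in> P" "w \<in> X" "E w y" "E w z" "y \<noteq> z"
  shows "y \<in> X \<or> z \<in> X"
proof (rule ccontr)
  assume "\<not> (y \<in> X \<or> z \<in> X)"
  then have "card {y, z} \<le> card (nbrs V E w - X)"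
    using assms(4,5) by (intro card_mono) auto
  then show False using card_nbrs_outside_unit[OF assms(1-3)] assms(6) by simp
qed

lemma triangle_within_unit:
  assumes P: "unit_partition V E P" and X: "X \<in> P" and t: "triangle a b c" "a \<in> X"
  shows "b \<in> X \<and> c \<in> X"
proof -
  have third: "z \<in> X" if "triangle x y z" "x \<in> X" "y \<in> X" for x y z
  proof (rule ccontr)
    assume "z \<notin> X"
    have "z \<in> V" using that(1) edge_in_V unfolding triangle_def by blast
    then obtain Z where Z: "Z \<in> P" "z \<in> Z" by (rule unit_partition_cover[OF P])
    then have "x \<notin> Z" "y \<notin> Z"
      using \<open>z \<notin> X\<close> unit_eq_if_meet[OF P] X that(2,3) by metis+
    then show False
      using nbr_in_unit[OF P Z, of x y] that edge_sym unfolding triangle_def by blast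
  qed
  have "b \<in> X \<or> c \<in> X"
    using nbr_in_unit[OF P X t(2), of b c] t(1) unfolding triangle_def by blast
  then show ?thesis using third[OF t(1)] third[OF triangle_swap(2)[OF t(1)]] t(2) by blast
qed

lemma unit_subset:
  assumes P: "unit_partition V E P" and P': "unit_partition V E P'"
    and X: "X \<in> P" and Y: "Y \<in> P'" and v: "v \<in> X" "v \<in> Y"
  shows "X \<subseteq> Y"
  using P X
proof (cases rule: unit_partition_cases)
  case 1
  then obtain y z where "X = {v, y, z}" "triangle v y z" using v(1) by (rule induces_triangle_at)
  then show ?thesis using triangle_within_unit[OF P' Y] v(2) by blast
next
  case 2
  then obtain a b m1 m2 where D: "X = {a, b, m1, m2}" "diamond a b m1 m2"
    unfolding induces_diamond_iff by blast
  then have t: "triangle m1 a m2" "triangle m2 a m1" "triangle m1 b m2"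
    "triangle a m1 m2" "triangle b m1 m2"
    unfolding triangle_def diamond_def using edge_sym by blast+
  have "m1 \<in> Y"
    using D(1) v triangle_within_unit[OF P' Y t(4)] triangle_within_unit[OF P' Y t(5)]
      triangle_within_unit[OF P' Y t(2)] by blast
  then show ?thesis
    using D(1) triangle_within_unit[OF P' Y t(1)] triangle_within_unit[OF P' Y t(3)] by blast
qed

lemma unit_partition_unique:
  assumes "unit_partition V E P" "unit_partition V E P'"
  shows "P = P'"
proof -
  have "P \<subseteq> P'" if P: "unit_partition V E P" and P': "unit_partition V E P'" for P P'
  proof
    fix X assume X: "X \<in> P"
    then obtain v where v: "v \<in> X" using unit_nonempty[OF P] by blast
    then have "v \<in> V" using unit_partition_subset_V[OF P X] by blast
    then obtain Y where Y: "Y \<in> P'" "v \<in> Y" by (rule unit_partition_cover[OF P'])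
    then have "X = Y"
      using unit_subset[OF P P' X Y(1) v] unit_subset[OF P' P Y(1) X Y(2) v] by blast
    then show "X \<in> P'" using Y by blast
  qed
  then show ?thesis using assms by blast
qed

lemma num_units_eq_card: "unit_partition V E P \<Longrightarrow> num_units V E = card P"
  unfolding num_units_def using unit_partition_unique by (metis the_equality)

lemma card_units_le_sigma:
  assumes "unit_partition V E P"
  shows "card P \<le> sigma V E 2 q"
proof (rule le_sigma)
  fix S assume "spreading_set V E 2 q S"
  then show "card P \<le> card S"
    using card_le_spreading_set unit_partition_disjoint unit_partition_subset_V unit_nonempty
      card_nbrs_outside_unit assms by metis
qed

lemma spreads_insert:
  assumes "w \<in> V" "u \<in> B" "u' \<in> B" "u \<noteq> u'" "E w u" "E w u'" "y \<in> B" "E u y"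
  shows "spreads 2 2 B (insert w B)"
proof (cases "w \<in> B")
  case True
  then show ?thesis by (simp add: insert_absorb)
next
  case False
  have "card {u, u'} \<le> card (nbrs V E w \<inter> B)"
    using assms by (intro card_mono) auto
  then have two_blue: "2 \<le> card (nbrs V E w \<inter> B)" using assms(4) by simp
  have "card (nbrs V E u - B) \<le> card (nbrs V E u - {y})"
    using assms(7) by (intro card_mono) auto
  also have "\<dots> = 2"
    using card_nbrs[of u] assms(5,8) edge_in_V by (simp add: card_Diff_singleton)
  finally have "enat (card (nbrs V E u - B)) \<le> 2" by (simp add: numeral_eq_enat)
  moreover have "u \<in> nbrs V E w \<inter> B" using assms(2,5) by simp
  ultimately have "spread_step V E 2 2 B (insert w B)"
    unfolding spread_step_def using assms(1) False two_blue by blast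
  then show ?thesis by blast
qed

lemma sigma_K4_le_2:
  assumes "is_K4 V E"
  shows "sigma V E 2 2 \<le> 2"
proof -
  have "card V = Suc 3" and adj: "\<forall>u\<in>V. \<forall>v\<in>V. u \<noteq> v \<longrightarrow> E u v"
    using assms unfolding is_K4_def by auto
  then obtain a V' where "V = insert a V'" "a \<notin> V'" "card V' = 3"
    unfolding card_Suc_eq by blast
  then obtain b c d where V: "V = {a, b, c, d}"
    and ne: "a \<noteq> b" "a \<noteq> c" "a \<noteq> d" "b \<noteq> c" "b \<noteq> d" "c \<noteq> d"
    unfolding card_3_iff by auto
  have e: "E c a" "E c b" "E d a" "E d b" "E a b" using adj V ne by auto
  have "spreads 2 2 {a, b} (insert c {a, b})"
    by (rule spreads_insert[of c a "{a, b}" b b]) (use e ne V in auto)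
  moreover have "spreads 2 2 (insert c {a, b}) (insert d (insert c {a, b}))"
    by (rule spreads_insert[of d a "insert c {a, b}" b b]) (use e ne V in auto)
  ultimately have "spreading_set V E 2 2 {a, b}"
    unfolding spreading_set_def using V by (auto simp: insert_commute)
  then have "sigma V E 2 2 \<le> card {a, b}" by (rule sigma_le_card)
  also have "\<dots> \<le> 2" by (simp add: card_insert_le_m1)
  finally show ?thesis .
qed

lemma triangle_absorbed:
  assumes t: "triangle w s z" and x: "E x w" "x \<noteq> s" "x \<in> B" "s \<in> B" "y \<in> B" "E x y"
  shows "\<exists>B'. spreads 2 2 B B' \<and> B \<union> {w, s, z} \<subseteq> B'"
proof -
  have "w \<noteq> s" "E w s" "E w z" "E s z" using t unfolding triangle_def by auto
  then have t': "w \<noteq> s" "E w s" "E z w" "E z s" "E w x" "w \<in> V" "z \<in> V"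
    using edge_sym[of w z] edge_sym[of s z] edge_sym[OF x(1)] edge_in_V[of w z] by auto
  have "spreads 2 2 B (insert w B)"
    by (rule spreads_insert[of w x B s y]) (auto simp: t' x)
  moreover have "spreads 2 2 (insert w B) (insert z (insert w B))"
    by (rule spreads_insert[of z w "insert w B" s s]) (auto simp: t' x)
  ultimately show ?thesis using x(4) by (intro exI[of _ "insert z (insert w B)"]) auto
qed

lemma diamond_absorbed:
  assumes d: "diamond w t s m" and x: "E x w" "x \<noteq> s" "x \<in> B" "s \<in> B" "y \<in> B" "E x y"
  shows "\<exists>B'. spreads 2 2 B B' \<and> B \<union> {w, t, s, m} \<subseteq> B'"
proof -
  have "w \<noteq> s" "s \<noteq> m" "E w s" "E w m" "E t s" "E t m" "E s m"
    using d unfolding diamond_def by auto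
  then have d': "w \<noteq> s" "s \<noteq> m" "E w s" "E m w" "E m s" "E t s" "E t m" "E s w" "E w x"
    "w \<in> V" "m \<in> V" "t \<in> V"
    using edge_sym[of w m] edge_sym[of s m] edge_sym[of w s] edge_sym[OF x(1)]
      edge_in_V[of w m] edge_in_V[of t s] by auto
  have "spreads 2 2 B (insert w B)"
    by (rule spreads_insert[of w x B s y]) (auto simp: d' x)
  moreover have "spreads 2 2 (insert w B) (insert m (insert w B))"
    by (rule spreads_insert[of m w "insert w B" s s]) (auto simp: d' x)
  moreover have "spreads 2 2 (insert m (insert w B)) (insert t (insert m (insert w B)))"
    by (rule spreads_insert[of t s "insert m (insert w B)" m w]) (auto simp: d' x)
  ultimately show ?thesis
    using x(4) by (intro exI[of _ "insert t (insert m (insert w B))"]) auto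
qed

(* The seed s is a neighbour of w in C: once x and s are blue, w turns blue, and then all of C. *)
lemma unit_absorbed:
  assumes P: "unit_partition V E P" and C: "C \<in> P" "w \<in> C" and x: "E x w" "x \<notin> C"
  obtains s where "s \<in> C"
    "\<And>B y. x \<in> B \<Longrightarrow> s \<in> B \<Longrightarrow> y \<in> B \<Longrightarrow> E x y \<Longrightarrow> \<exists>B'. spreads 2 2 B B' \<and> B \<union> C \<subseteq> B'"
  using P C(1)
proof (cases rule: unit_partition_cases)
  case 1
  then obtain s z where C': "C = {w, s, z}" "triangle w s z"
    using C(2) by (rule induces_triangle_at)
  have "x \<noteq> s" using x(2) C'(1) by blast
  show thesis
  proof (rule that[of s])
    show "s \<in> C" using C'(1) by simp
  next
    fix B y assume "x \<in> B" "s \<in> B" "y \<in> B" "E x y"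
    then show "\<exists>B'. spreads 2 2 B B' \<and> B \<union> C \<subseteq> B'"
      using triangle_absorbed[OF C'(2) x(1) \<open>x \<noteq> s\<close>] C'(1) by simp
  qed
next
  case 2
  then obtain a b m1 m2 where D: "C = {a, b, m1, m2}" "diamond a b m1 m2"
    unfolding induces_diamond_iff by blast
  have "w \<noteq> m1" "w \<noteq> m2"
    using diamond_middle_nbr[OF D(2), of x] diamond_middle_nbr[OF diamond_swap(2)[OF D(2)], of x]
      x edge_sym[OF x(1)] D(1) by auto
  then have "w = a \<or> w = b" using C(2) D(1) by simp
  then obtain t where dt: "diamond w t m1 m2" "C = {w, t, m1, m2}"
    using D diamond_swap(1)[OF D(2)] by (auto simp: insert_commute)
  have "x \<noteq> m1" using x(2) dt(2) by blast
  show thesis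
  proof (rule that[of m1])
    show "m1 \<in> C" using dt(2) by simp
  next
    fix B y assume "x \<in> B" "m1 \<in> B" "y \<in> B" "E x y"
    then show "\<exists>B'. spreads 2 2 B B' \<and> B \<union> C \<subseteq> B'"
      using diamond_absorbed[OF dt(1) x(1) \<open>x \<noteq> m1\<close>] dt(2) by simp
  qed
qed

lemma unit_spreads_from_two:
  assumes "unit_partition V E P" "C \<in> P"
  obtains S B where "S \<subseteq> C" "card S \<le> 2" "spreads 2 2 S B" "C \<subseteq> B"
  using assms
proof (cases rule: unit_partition_cases)
  case 1
  then obtain a b c where C: "C = {a, b, c}" "triangle a b c"
    unfolding induces_triangle_iff by blast
  then have t: "E a b" "E a c" "E b c" "a \<noteq> b" unfolding triangle_def by auto
  have "spreads 2 2 {a, b} (insert c {a, b})"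
    by (rule spreads_insert[of c a _ b b])
      (simp_all add: t edge_sym[OF t(2)] edge_sym[OF t(3)] edge_in_V[OF t(2)])
  then show thesis
    by (rule that[of "{a, b}", rotated 2]) (auto simp: C(1) card_insert_le_m1)
next
  case 2
  then obtain a b m1 m2 where C: "C = {a, b, m1, m2}" "diamond a b m1 m2"
    unfolding induces_diamond_iff by blast
  then have d: "E a m1" "E a m2" "E b m1" "E b m2" "E m1 m2" "m1 \<noteq> m2"
    unfolding diamond_def by auto
  have V: "a \<in> V" "b \<in> V" using edge_in_V d(1,3) by auto
  have "spreads 2 2 {m1, m2} (insert a {m1, m2})"
    by (rule spreads_insert[of a m1 _ m2 m2]) (simp_all add: d V)
  moreover have "spreads 2 2 (insert a {m1, m2}) (insert b (insert a {m1, m2}))"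
    by (rule spreads_insert[of b m1 _ m2 m2]) (simp_all add: d V)
  ultimately have "spreads 2 2 {m1, m2} (insert b (insert a {m1, m2}))" by (rule rtranclp_trans)
  then show thesis
    by (rule that[of "{m1, m2}", rotated 2]) (auto simp: C(1) card_insert_le_m1)
qed

end

locale connected_cubic_graph = cubic_graph +
  assumes connected: "connected_graph V E"
begin

lemma V_nonempty: "V \<noteq> {}"
  using connected unfolding connected_graph_def by blast

lemma edge_leaving:
  assumes "u \<in> A" "u \<in> V" "v \<in> V" "v \<notin> A"
  obtains x y where "x \<in> A" "y \<notin> A" "E x y"
proof -
  have "(\<lambda>x y. x \<in> V \<and> y \<in> V \<and> E x y)\<^sup>*\<^sup>* u v"
    using connected assms(2,3) unfolding connected_graph_def by blast
  from rtranclp_leaves_set[OF this assms(1,4)] show thesis using that by blast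
qed

lemma is_K4_if_triangle_with_common_nbr:
  assumes t: "triangle a b c" and d: "E a d" "E b d" "E c d"
  shows "is_K4 V E"
proof -
  have ne: "a \<noteq> b" "a \<noteq> c" "b \<noteq> c" "d \<noteq> a" "d \<noteq> b" "d \<noteq> c"
    using t d unfolding triangle_def by auto
  have adj: "E a b" "E a c" "E a d" "E b a" "E b c" "E b d"
    "E c a" "E c b" "E c d" "E d a" "E d b" "E d c"
    using t d edge_sym unfolding triangle_def by blast+
  let ?K = "{a, b, c, d}"
  have closed: "y \<in> ?K" if "x \<in> ?K" "E x y" for x y
    using that nbr_cases[of a b c d y] nbr_cases[of b a c d y] nbr_cases[of c a b d y]
      nbr_cases[of d a b c y] adj ne by auto
  have "V \<subseteq> ?K"
  proof
    fix v assume "v \<in> V"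
    show "v \<in> ?K"
    proof (rule ccontr)
      assume "v \<notin> ?K"
      then obtain x y where "x \<in> ?K" "y \<notin> ?K" "E x y"
        using edge_leaving[of a ?K v] \<open>v \<in> V\<close> edge_in_V adj(1) by blast
      then show False using closed by blast
    qed
  qed
  moreover have "?K \<subseteq> V" using adj edge_in_V by blast
  ultimately have "V = ?K" by blast
  then show ?thesis unfolding is_K4_def using ne adj by auto
qed

lemma edge_to_new_unit:
  assumes P: "unit_partition V E P" and Q: "Q \<subseteq> P" "Q \<noteq> {}" "Q \<noteq> P"
  obtains X x C w where "X \<in> Q" "x \<in> X" "C \<in> P - Q" "w \<in> C" "E x w"
proof -
  obtain X0 a where a: "X0 \<in> Q" "a \<in> X0"
    using Q(1,2) unit_nonempty[OF P] by blast
  obtain C0 b where b: "C0 \<in> P - Q" "b \<in> C0"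
    using Q(1,3) unit_nonempty[OF P] by blast
  have "b \<notin> \<Union>Q"
    using b Q(1) unit_eq_if_meet[OF P] by blast
  moreover have "a \<in> V" "b \<in> V"
    using a b Q(1) unit_partition_subset_V[OF P] by blast+
  ultimately obtain x w where xw: "x \<in> \<Union>Q" "w \<notin> \<Union>Q" "E x w"
    using edge_leaving[of a "\<Union>Q" b] a by blast
  obtain X where X: "X \<in> Q" "x \<in> X" using xw(1) by blast
  obtain C where C: "C \<in> P" "w \<in> C" using P edge_in_V[OF xw(3)] by (auto elim: unit_partition_cover)
  then have "C \<in> P - Q" using xw(2) by blast
  then show thesis using that X C(2) xw(3) by blast
qed

lemma spreads_to_adjacent_unit:
  assumes P: "unit_partition V E P" and Q: "Q \<subseteq> P" "Q \<noteq> {}" "Q \<noteq> P"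
    and SB: "spreads 2 2 S B" "\<Union>Q \<subseteq> B"
  obtains C s B' where "C \<in> P - Q" "s \<in> C" "spreads 2 2 (insert s S) B'" "\<Union>(insert C Q) \<subseteq> B'"
proof -
  obtain X x C w where X: "X \<in> Q" "x \<in> X" and C: "C \<in> P - Q" "w \<in> C" and xw: "E x w"
    using edge_to_new_unit[OF P Q] .
  have "x \<notin> C"
    using C X Q(1) unit_eq_if_meet[OF P] by blast
  then obtain s where s: "s \<in> C" and absorb:
    "\<And>B y. x \<in> B \<Longrightarrow> s \<in> B \<Longrightarrow> y \<in> B \<Longrightarrow> E x y \<Longrightarrow> \<exists>B'. spreads 2 2 B B' \<and> B \<union> C \<subseteq> B'"
    using unit_absorbed[OF P _ C(2) xw] C(1) by blast
  obtain y where y: "y \<in> X" "E x y"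
    using unit_has_two_nbrs[OF P _ X(2)] X(1) Q(1) by blast
  obtain B1 where B1: "spreads 2 2 (insert s S) B1" "B \<subseteq> B1"
    using spreads_mono_seed[OF SB(1), of "insert s S"] by blast
  have "x \<in> B1" "y \<in> B1" "s \<in> B1"
    using X y SB(2) B1 spreads_increasing[OF B1(1)] by blast+
  then obtain B2 where B2: "spreads 2 2 B1 B2" "B1 \<union> C \<subseteq> B2"
    using absorb y(2) by blast
  show thesis
  proof (rule that)
    show "C \<in> P - Q" "s \<in> C" by (fact C(1), fact s)
    show "spreads 2 2 (insert s S) B2" using B1(1) B2(1) by (rule rtranclp_trans)
    show "\<Union>(insert C Q) \<subseteq> B2" using SB(2) B1(2) B2(2) by blast
  qed
qed

lemma spreading_set_from_units:
  assumes P: "unit_partition V E P"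
  shows "Q \<subseteq> P \<Longrightarrow> Q \<noteq> {} \<Longrightarrow> S \<subseteq> V \<Longrightarrow> spreads 2 2 S B \<Longrightarrow> \<Union>Q \<subseteq> B
    \<Longrightarrow> \<exists>S'. spreading_set V E 2 2 S' \<and> card S' \<le> card S + card (P - Q)"
proof (induction "card (P - Q)" arbitrary: Q S B)
  case 0
  then have "P - Q = {}" using unit_partition_finite[OF P] by simp
  then have "V \<subseteq> B" using 0(6) unit_partition_Union[OF P] by blast
  then have "B = V" using spreads_subset_V[OF 0(5,4)] by blast
  then have "spreading_set V E 2 2 S" unfolding spreading_set_def using 0(4,5) by simp
  then show ?case by auto
next
  case (Suc n)
  then have "Q \<noteq> P" by auto
  with Suc.prems obtain C s B' where C: "C \<in> P - Q" "s \<in> C"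
    and B': "spreads 2 2 (insert s S) B'" "\<Union>(insert C Q) \<subseteq> B'"
    by (elim spreads_to_adjacent_unit[OF P])
  have "P - insert C Q = (P - Q) - {C}" by blast
  then have "n = card (P - insert C Q)"
    using Suc.hyps(2) C(1) unit_partition_finite[OF P] by (simp add: card_Diff_singleton)
  moreover have "insert C Q \<subseteq> P" using C(1) Suc.prems(1) by blast
  moreover have "insert s S \<subseteq> V"
    using Suc.prems(3) C unit_partition_subset_V[OF P] by blast
  ultimately obtain S' where S': "spreading_set V E 2 2 S'" "card S' \<le> card (insert s S) + n"
    using Suc.hyps(1)[OF _ _ _ _ B'] by blast
  moreover have "card (insert s S) \<le> card S + 1"
    using finite_subset[OF Suc.prems(3) finite_V] by (simp add: card_insert_if)
  ultimately show ?case using Suc.hyps(2) by (intro exI[of _ S']) auto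
qed

lemma sigma_le_card_units:
  assumes P: "unit_partition V E P"
  shows "sigma V E 2 2 \<le> card P + 1"
proof -
  obtain C where C: "C \<in> P"
    using V_nonempty unit_partition_Union[OF P] by blast
  obtain S B where S: "S \<subseteq> C" "card S \<le> 2" "spreads 2 2 S B" "C \<subseteq> B"
    using unit_spreads_from_two[OF P C] .
  have "S \<subseteq> V" using S(1) unit_partition_subset_V[OF P C] by blast
  then obtain S' where "spreading_set V E 2 2 S'" "card S' \<le> card S + card (P - {C})"
    using spreading_set_from_units[OF P, of "{C}", OF _ _ _ S(3)] C S(4) by auto
  moreover have "card (P - {C}) = card P - 1"
    using C unit_partition_finite[OF P] by (simp add: card_Diff_singleton)
  moreover have "0 < card P"
    using C unit_partition_finite[OF P] card_gt_0_iff by blast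
  ultimately show ?thesis using S(2) sigma_le_card by fastforce
qed

end

locale connected_claw_free_cubic_graph = connected_cubic_graph +
  assumes claw_free: "claw_free V E"
begin

lemma vertex_in_triangle:
  assumes "v \<in> V"
  obtains y z where "triangle v y z"
proof -
  obtain a b c where abc: "nbrs V E v = {a, b, c}" "a \<noteq> b" "b \<noteq> c" "a \<noteq> c"
    using card_nbrs[OF assms] unfolding card_3_iff by blast
  then have e: "E v a" "E v b" "E v c" by auto
  then have "a \<in> V" "b \<in> V" "c \<in> V" using edge_in_V by blast+
  then have "E a b \<or> E a c \<or> E b c"
    using claw_free e abc(2-4) assms unfolding claw_free_def by blast
  then show thesis
    using that e abc(2-4) edge_neq[OF e(1)] edge_neq[OF e(2)] edge_neq[OF e(3)]
    unfolding triangle_def by blast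
qed

lemma diamond_if_triangles_share_edge:
  assumes "\<not> is_K4 V E" "triangle v a b" "triangle v a d" "b \<noteq> d"
  shows "induces_diamond E {b, d, v, a}"
proof -
  have t: "v \<noteq> a" "v \<noteq> b" "a \<noteq> b" "E v a" "E v b" "E a b" "v \<noteq> d" "a \<noteq> d" "E v d" "E a d"
    using assms(2,3) unfolding triangle_def by auto
  have "\<not> E b d"
    using is_K4_if_triangle_with_common_nbr[OF assms(2) t(9,10)] assms(1) by blast
  then have "diamond b d v a"
    using t assms(4) edge_sym unfolding diamond_def by blast
  then show ?thesis unfolding induces_diamond_iff by blast
qed

lemma triangles_meeting_in_diamond:
  assumes "\<not> is_K4 V E" "triangle v a b" "triangle v c d" "{a, b} \<noteq> {c, d}"
  obtains D where "induces_diamond E D" "{v, a, b} \<subseteq> D"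
proof -
  have t: "a \<noteq> b" "E v a" "E v b" "c \<noteq> d" "E v c" "E v d"
    using assms(2,3) unfolding triangle_def by auto
  then consider "a = c" | "a = d" | "b = c" | "b = d"
    using no_four_nbrs[of v a b c d] by blast
  then show thesis
  proof cases
    case 1
    then show thesis
      using that diamond_if_triangles_share_edge[OF assms(1,2), of d] assms(3,4) by auto
  next
    case 2
    then show thesis
      using that diamond_if_triangles_share_edge[OF assms(1,2), of c]
        triangle_swap(2)[OF assms(3)] assms(4)
      by auto
  next
    case 3
    then show thesis
      using that diamond_if_triangles_share_edge[OF assms(1) triangle_swap(2)[OF assms(2)], of d]
        assms(3,4)
      by auto
  next
    case 4
    then show thesis
      using that diamond_if_triangles_share_edge[OF assms(1) triangle_swap(2)[OF assms(2)], of c]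
        triangle_swap(2)[OF assms(3)] assms(4) by auto
  qed
qed

lemma induced_triangles_meeting_in_diamond:
  assumes "\<not> is_K4 V E" "induces_triangle E X" "induces_triangle E Y" "X \<noteq> Y" "v \<in> X" "v \<in> Y"
  obtains D where "induces_diamond E D" "X \<subseteq> D"
proof -
  obtain a b where X: "X = {v, a, b}" "triangle v a b"
    using assms(2,5) by (rule induces_triangle_at)
  obtain c d where Y: "Y = {v, c, d}" "triangle v c d"
    using assms(3,6) by (rule induces_triangle_at)
  have "{a, b} \<noteq> {c, d}" using X(1) Y(1) assms(4) by auto
  then show thesis
    using triangles_meeting_in_diamond[OF assms(1) X(2) Y(2)] that X(1) by blast
qed

definition canonical_units :: "'a set set" where
  "canonical_units = {D. induces_diamond E D}
     \<union> {X. induces_triangle E X \<and> \<not> (\<exists>D. induces_diamond E D \<and> X \<subseteq> D)}"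

lemma canonical_unit_eq_if_meets_lone_triangle:
  assumes "\<not> is_K4 V E" "U \<in> canonical_units" "induces_triangle E W"
    and lone: "\<not> (\<exists>D. induces_diamond E D \<and> W \<subseteq> D)" and v: "v \<in> U" "v \<in> W"
  shows "U = W"
  using assms(2) unfolding canonical_units_def
proof (elim UnE CollectE conjE)
  assume "induces_diamond E U"
  moreover from this have "W \<subseteq> U" using induced_triangle_subset_diamond assms(3) v by blast
  ultimately show "U = W" using lone by blast
next
  assume U: "induces_triangle E U"
  show "U = W"
  proof (rule ccontr)
    assume "U \<noteq> W"
    then obtain D where "induces_diamond E D" "W \<subseteq> D"
      using induced_triangles_meeting_in_diamond[OF assms(1,3) U] v by metis
    with lone show False by blast
  qed
qed

lemma canonical_units_eq_if_meet:
  assumes "\<not> is_K4 V E" "X \<in> canonical_units" "Y \<in> canonical_units" "v \<in> X" "v \<in> Y"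
  shows "X = Y"
proof -
  consider "induces_diamond E X" "induces_diamond E Y"
    | "induces_triangle E X" "\<not> (\<exists>D. induces_diamond E D \<and> X \<subseteq> D)"
    | "induces_triangle E Y" "\<not> (\<exists>D. induces_diamond E D \<and> Y \<subseteq> D)"
    using assms(2,3) unfolding canonical_units_def by blast
  then show ?thesis
  proof cases
    case 1
    then show ?thesis using induced_diamonds_meeting_eq assms(4,5) by blast
  next
    case 2
    then show ?thesis
      using canonical_unit_eq_if_meets_lone_triangle[OF assms(1,3)] assms(4,5) by metis
  next
    case 3
    then show ?thesis
      using canonical_unit_eq_if_meets_lone_triangle[OF assms(1,2)] assms(4,5) by metis
  qed
qed

lemma unit_partition_canonical_units:
  assumes "\<not> is_K4 V E"
  shows "unit_partition V E canonical_units"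
  unfolding unit_partition_def
proof (intro conjI ballI impI)
  show "\<Union>canonical_units = V"
  proof
    show "\<Union>canonical_units \<subseteq> V"
      unfolding canonical_units_def using induced_triangle_subset_V induced_diamond_subset_V by blast
  next
    show "V \<subseteq> \<Union>canonical_units"
    proof
      fix v assume "v \<in> V"
      then obtain y z where "triangle v y z" by (rule vertex_in_triangle)
      then have "induces_triangle E {v, y, z}" by (rule triangle_induces)
      then show "v \<in> \<Union>canonical_units" unfolding canonical_units_def by blast
    qed
  qed
next
  fix X Y assume "X \<in> canonical_units" "Y \<in> canonical_units" "X \<noteq> Y"
  then show "X \<inter> Y = {}" using canonical_units_eq_if_meet[OF assms] by blast
next
  fix X assume "X \<in> canonical_units"
  then show "induces_triangle E X \<or> induces_diamond E X" unfolding canonical_units_def by blast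
qed

end

theorem corollary4p8:
  fixes V :: "'a set" and E :: "'a \<Rightarrow> 'a \<Rightarrow> bool"
  assumes "simple_graph V E" and "connected_graph V E"
    and "claw_free V E" and "cubic V E"
  shows "(sigma V E 2 3 \<le> sigma V E 2 2 \<and> sigma V E 2 2 \<le> sigma V E 2 3 + 1) \<and>
         (\<not> is_K4 V E \<longrightarrow>
           num_units V E \<le> sigma V E 2 2 \<and> sigma V E 2 2 \<le> num_units V E + 1)"
proof -
  interpret connected_claw_free_cubic_graph V E
    using assms by unfold_locales
  have q_mono: "sigma V E 2 3 \<le> sigma V E 2 2"
    by (rule sigma_antimono_q) (simp add: numeral_eq_enat)
  show ?thesis
  proof (cases "is_K4 V E")
    case True
    have "0 < sigma V E 2 3" by (rule sigma_pos[OF finite_V V_nonempty]) simp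
    with True q_mono sigma_K4_le_2 show ?thesis by linarith
  next
    case False
    then have P: "unit_partition V E canonical_units" by (rule unit_partition_canonical_units)
    have "card canonical_units \<le> sigma V E 2 3" "sigma V E 2 2 \<le> card canonical_units + 1"
      using card_units_le_sigma[OF P] sigma_le_card_units[OF P] by auto
    with False q_mono num_units_eq_card[OF P] show ?thesis by linarith
  qed
qed

end
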